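(* Let $\mathcal M$ be the monoid obtained from the semigroup with zero $\langle a, e \mid ee = e,\ aaa = ae = 0,\ eaa = aa \rangle$ by adjoining an identity element $1$. Then $\mathcal M$ (a monoid of order six) is of type $2^{\aleph_0}$, i.e., the monoid variety generated by $\mathcal M$ has uncountably many subvarieties.
   Context: In the presentation, $0$ denotes the zero element of the presented semigroup; the resulting monoid has the six elements $1, a, e, aa, ea, 0$. Varieties are varieties of monoids (classes closed under homomorphic images, submonoids, and arbitrary direct products). A monoid is of type $2^{\aleph_0}$ if the variety it generates has uncountably many subvarieties. *)

theory Defs
  imports Main "HOL-Library.Countable_Set"
begin

text \<open>The six-element monoid M = S^1 where S = < a, e | ee = e, aaa = ae = 0, eaa = aa >
  (with zero 0). Elements: 1, a, e, aa, ea, 0.\<close>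

datatype M6 = One | A | E | AA | EA | Zero

fun mmul :: "M6 \<Rightarrow> M6 \<Rightarrow> M6" where
  "mmul One y = y"
| "mmul x One = x"
| "mmul Zero _ = Zero"
| "mmul _ Zero = Zero"
| "mmul A A = AA"
| "mmul A E = Zero"
| "mmul A AA = Zero"
| "mmul A EA = Zero"
| "mmul E A = EA"
| "mmul E E = E"
| "mmul E AA = AA"
| "mmul E EA = EA"
| "mmul AA _ = Zero"
| "mmul EA A = AA"
| "mmul EA _ = Zero"

definition eval_word :: "(nat \<Rightarrow> M6) \<Rightarrow> nat list \<Rightarrow> M6" where
  "eval_word \<phi> w = foldr (\<lambda>x r. mmul (\<phi> x) r) w One"

definition Id_M :: "(nat list \<times> nat list) set" where
  "Id_M = {(u, v). \<forall>\<phi>. eval_word \<phi> u = eval_word \<phi> v}"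

definition subst_word :: "(nat \<Rightarrow> nat list) \<Rightarrow> nat list \<Rightarrow> nat list" where
  "subst_word \<sigma> w = concat (map \<sigma> w)"

text \<open>By Birkhoff's theorem, subvarieties of the monoid variety var M correspond bijectively
  (order-reversingly) to equational theories containing Id_M.\<close>
definition equational_theory :: "(nat list \<times> nat list) set \<Rightarrow> bool" where
  "equational_theory R \<longleftrightarrow>
     equiv UNIV R \<and>
     (\<forall>u v w z. (u, v) \<in> R \<longrightarrow> (w @ u @ z, w @ v @ z) \<in> R) \<and>
     (\<forall>u v \<sigma>. (u, v) \<in> R \<longrightarrow> (subst_word \<sigma> u, subst_word \<sigma> v) \<in> R)"

definition subvariety_theories :: "(nat list \<times> nat list) set set" where
  "subvariety_theories = {R. equational_theory R \<and> Id_M \<subseteq> R}"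

end

(*
  For k >= 5 let
    W_k = x0 t1 x1 t2 x2 t3 y x0 x3 x1 x4 x2 x5 ... xk x(k+3) y t4 x(k+1) t5 x(k+2) t6 x(k+3),
  a word in which every letter occurs at most twice.  Evaluating a letter at a counts its
  occurrences up to three (aaa = 0), and evaluating p at e and q at a detects whether every
  occurrence of p precedes every occurrence of q (ae = 0, while eaa = aa).  So if W_k = w
  holds in M, then w has the same letter counts and the same precedences as W_k; since no
  two adjacent letters of W_k both recur later or both occurred earlier, this forces
  w = W_k, i.e. W_k is an isoterm for M.

  Inside W_k, the gap between the two occurrences of y is the only gap between the two
  occurrences of a letter that consists of twice-occurring letters and does not have
  length 4.  Consequently, if some substitution instance of W_m is a factor of W_k and
  does not erase y, then the image of the gap of y in W_m is such a gap in W_k; it cannot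
  have length 4, and a cascade through the gaps x(i+1) x(i+4) x(i+2) x(i+5) of the
  letters x(i+3) shows that every x_i is mapped to a single letter, so 2m + 2 = 2k + 2.

  Now, for a set S of naturals, the identities u = v such that, for every n in S, an
  instance of u is a factor of W_(n+5) exactly when the same instance of v is, form an
  equational theory containing that of M; it contains W_(m+5) = W_(m+5) y if and only if
  m is not in S.  Distinct sets S thus give distinct subvarieties of var M.
*)
theory Submission
  imports Defs "HOL-Library.Sublist"
begin

lemma count_list_pos_iff: "0 < count_list xs x \<longleftrightarrow> x \<in> set xs"
  using count_list_0_iff[of xs x] by auto

lemma count_list_gap_le:
  "W = L @ c # J @ c # R \<Longrightarrow> count_list L z + count_list J z + count_list R z \<le> count_list W z"
  by simp

lemma split_list_twice:
  assumes "2 \<le> count_list u x"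
  obtains U V U' where "u = U @ x # V @ x # U'"
proof -
  obtain U V' where u: "u = U @ x # V'" and "x \<notin> set U"
    using assms split_list_first[of x u] count_notin[of x u] by fastforce
  then have "x \<in> set V'"
    using assms count_notin[of x V'] by fastforce
  then show ?thesis
    using that u split_list[of x V'] by fastforce
qed

lemma append_Cons_eq_first_occurrence:
  "xs @ x # ys = xs' @ x # ys' \<Longrightarrow> x \<notin> set xs \<Longrightarrow> x \<notin> set xs' \<Longrightarrow> xs = xs' \<and> ys = ys'"
  by (induction xs arbitrary: xs') (auto simp: Cons_eq_append_conv)

lemma subst_word_Nil [simp]: "subst_word \<sigma> [] = []"
  and subst_word_Cons [simp]: "subst_word \<sigma> (x # u) = \<sigma> x @ subst_word \<sigma> u"
  and subst_word_append [simp]: "subst_word \<sigma> (u @ v) = subst_word \<sigma> u @ subst_word \<sigma> v"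
  by (simp_all add: subst_word_def)

lemma set_subst_word: "set (subst_word \<sigma> u) = (\<Union>x\<in>set u. set (\<sigma> x))"
  by (simp add: subst_word_def)

lemma subst_word_eq_Nil_iff: "subst_word \<sigma> u = [] \<longleftrightarrow> (\<forall>x\<in>set u. \<sigma> x = [])"
  by (simp add: subst_word_def)

lemma length_subst_word_singletons:
  "(\<And>x. x \<in> set u \<Longrightarrow> length (\<sigma> x) = 1) \<Longrightarrow> length (subst_word \<sigma> u) = length u"
  by (induction u) auto

lemma count_list_subst_word_ge:
  "z \<in> set (\<sigma> x) \<Longrightarrow> count_list u x \<le> count_list (subst_word \<sigma> u) z"
  using count_list_0_iff[of "\<sigma> x" z] by (induction u) auto

lemma subst_word_subst_word:
  "subst_word \<tau> (subst_word \<sigma> u) = subst_word (\<lambda>x. subst_word \<tau> (\<sigma> x)) u"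
  by (induction u) simp_all

lemma subst_word_singleton: "subst_word (\<lambda>x. [x]) u = u"
  by (induction u) simp_all

section \<open>The identities of M\<close>

lemma mmul_assoc: "mmul (mmul a b) c = mmul a (mmul b c)"
  by (cases a; cases b; cases c) simp_all

lemma eval_word_Nil [simp]: "eval_word \<phi> [] = One"
  by (simp add: eval_word_def)

lemma eval_word_Cons [simp]: "eval_word \<phi> (x # u) = mmul (\<phi> x) (eval_word \<phi> u)"
  by (simp add: eval_word_def)

lemma eval_word_append: "eval_word \<phi> (u @ v) = mmul (eval_word \<phi> u) (eval_word \<phi> v)"
  by (induction u) (simp_all add: mmul_assoc)

lemma eval_word_subst_word:
  "eval_word \<phi> (subst_word \<sigma> u) = eval_word (\<lambda>x. eval_word \<phi> (\<sigma> x)) u"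
  by (induction u) (simp_all add: eval_word_append)

lemma Id_M_sym: "(u, v) \<in> Id_M \<Longrightarrow> (v, u) \<in> Id_M"
  by (simp add: Id_M_def)

lemma Id_M_subst_context:
  "(u, v) \<in> Id_M \<Longrightarrow> (p @ subst_word \<sigma> u @ q, p @ subst_word \<sigma> v @ q) \<in> Id_M"
  by (simp add: Id_M_def eval_word_append eval_word_subst_word)

fun A_power :: "nat \<Rightarrow> M6" where
  "A_power 0 = One"
| "A_power (Suc n) = mmul A (A_power n)"

lemma A_power_eq:
  "A_power n = (if n = 0 then One else if n = 1 then A else if n = 2 then AA else Zero)"
  by (induction n) auto

lemma eval_word_count_list:
  "eval_word (\<lambda>z. if z = x then A else One) w = A_power (count_list w x)"
  by (induction w) auto

lemma Id_M_count_list: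
  assumes "(u, v) \<in> Id_M" and "count_list u x \<le> 2"
  shows "count_list v x = count_list u x"
proof -
  have "A_power (count_list u x) = A_power (count_list v x)"
    using assms(1) by (simp add: Id_M_def flip: eval_word_count_list)
  then show ?thesis
    using assms(2) by (auto simp: A_power_eq split: if_splits)
qed

fun all_before :: "'a \<Rightarrow> 'a \<Rightarrow> 'a list \<Rightarrow> bool" where
  "all_before p q [] = True"
| "all_before p q (z # w) = ((z = q \<longrightarrow> p \<notin> set w) \<and> all_before p q w)"

lemma all_before_append:
  "all_before p q (u @ v) \<longleftrightarrow>
     all_before p q u \<and> all_before p q v \<and> (q \<in> set u \<longrightarrow> p \<notin> set v)"
  by (induction u) auto

lemma all_before_if_notin:
  "p \<notin> set w \<Longrightarrow> all_before p q w" "q \<notin> set w \<Longrightarrow> all_before p q w"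
  by (induction w) auto

lemma eval_word_all_before:
  assumes "p \<noteq> q"
  shows "eval_word (\<lambda>z. if z = p then E else if z = q then A else One) w =
    (if count_list w q \<le> 2 \<and> all_before p q w
     then mmul (if p \<in> set w then E else One) (A_power (count_list w q)) else Zero)"
proof (induction w)
  case (Cons z w)
  consider "z = p" | "z = q" | "z \<noteq> p" "z \<noteq> q" by blast
  then show ?case
    using Cons assms by cases (auto simp: A_power_eq)
qed simp

lemma Id_M_all_before:
  assumes "(u, v) \<in> Id_M" and "p \<noteq> q" and "count_list u q \<le> 2"
  shows "all_before p q v = all_before p q u"
proof -
  have "count_list v q = count_list u q"
    using assms(1,3) by (rule Id_M_count_list)
  moreover have "eval_word (\<lambda>z. if z = p then E else if z = q then A else One) u =
                 eval_word (\<lambda>z. if z = p then E else if z = q then A else One) v"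
    using assms(1) by (simp add: Id_M_def)
  ultimately show ?thesis
    using assms(3) by (auto simp: eval_word_all_before[OF assms(2)] A_power_eq split: if_splits)
qed

section \<open>An isoterm criterion\<close>

definition isoterm :: "nat list \<Rightarrow> bool" where
  "isoterm W \<longleftrightarrow> (\<forall>w. (W, w) \<in> Id_M \<longrightarrow> w = W)"

lemma all_before_first_difference:
  assumes "b \<noteq> a" "b \<notin> set X" "a \<notin> set Y" "a \<in> set Y'"
  shows "all_before a b (X @ a # Y) \<and> \<not> all_before a b (X @ b # Y')"
  using assms by (simp add: all_before_append all_before_if_notin)

lemma all_before_first_difference_old:
  assumes no_earlier_pair: "\<And>X' c e Z. X @ a # Y = X' @ c # e # Z \<Longrightarrow> c \<in> set X' \<Longrightarrow> e \<notin> set X'"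
    and "a \<in> set X" "b \<in> set X" "b \<in> set Y" "b \<notin> set Y'"
  obtains e where "e \<noteq> b" "\<not> all_before b e (X @ a # Y)" "all_before b e (X @ b # Y')"
proof -
  obtain e Z where Y: "Y = e # Z"
    using \<open>b \<in> set Y\<close> by (cases Y) auto
  have "e \<notin> set X"
    using no_earlier_pair[of X a e Z] \<open>a \<in> set X\<close> by (simp add: Y)
  with \<open>b \<in> set X\<close> have "e \<noteq> b"
    by auto
  moreover from \<open>e \<noteq> b\<close> \<open>b \<in> set Y\<close> have "\<not> all_before b e (X @ a # Y)"
    by (simp add: Y all_before_append)
  moreover have "all_before b e (X @ b # Y')"
    using \<open>e \<notin> set X\<close> \<open>e \<noteq> b\<close> \<open>b \<notin> set Y'\<close> by (simp add: all_before_append all_before_if_notin)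
  ultimately show ?thesis
    using that by blast
qed

lemma all_before_first_difference_new:
  assumes no_later_pair: "\<And>X' c e Z. X @ a # Y = X' @ c # e # Z \<Longrightarrow> c \<in> set Z \<Longrightarrow> e \<notin> set Z"
    and "b \<noteq> a" "a \<notin> set X" "b \<notin> set X" "a \<in> set Y" "b \<in> set Y'"
    and tail_count: "\<And>z. count_list (b # Y') z = count_list (a # Y) z"
  obtains e where "e \<noteq> b" "all_before e b (X @ a # Y)" "\<not> all_before e b (X @ b # Y')"
proof -
  obtain e Z where Y: "Y = e # Z"
    using \<open>a \<in> set Y\<close> by (cases Y) auto
  have "e \<notin> set Z"
  proof (cases "a \<in> set Z")
    case True
    then show ?thesis
      using no_later_pair[of X a e Z] by (simp add: Y)
  next
    case False
    then show ?thesis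
      using \<open>a \<in> set Y\<close> by (simp add: Y)
  qed
  have "e \<noteq> b"
  proof
    assume "e = b"
    have "count_list Y b \<ge> 2"
      using tail_count[of b] \<open>b \<in> set Y'\<close> \<open>b \<noteq> a\<close> count_list_0_iff[of Y' b] by simp
    then show False
      using \<open>e \<notin> set Z\<close> \<open>e = b\<close> by (simp add: Y)
  qed
  have "0 < count_list (a # Y) e"
    by (simp add: Y)
  then have "e \<in> set Y'"
    using tail_count[of e] \<open>e \<noteq> b\<close> count_list_0_iff[of Y' e] by auto
  then have "\<not> all_before e b (X @ b # Y')"
    by (simp add: all_before_append)
  moreover have "all_before e b (X @ a # Y)"
    using \<open>b \<notin> set X\<close> \<open>e \<notin> set Z\<close> \<open>e \<noteq> b\<close> \<open>b \<noteq> a\<close>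
    by (simp add: Y all_before_append all_before_if_notin)
  ultimately show ?thesis
    using that \<open>e \<noteq> b\<close> by blast
qed

lemma eq_if_same_count_list_and_all_before:
  fixes W w :: "'a list"
  assumes twice: "\<And>z. count_list W z \<le> 2"
    and no_later_pair: "\<And>X a e Z. W = X @ a # e # Z \<Longrightarrow> a \<in> set Z \<Longrightarrow> e \<notin> set Z"
    and no_earlier_pair: "\<And>X a e Z. W = X @ a # e # Z \<Longrightarrow> a \<in> set X \<Longrightarrow> e \<notin> set X"
    and count: "\<And>z. count_list w z = count_list W z"
    and before: "\<And>p q. p \<noteq> q \<Longrightarrow> all_before p q w = all_before p q W"
  shows "w = W"
proof (rule ccontr)
  assume "w \<noteq> W"
  moreover have "length w = length W"
    using sum_count_set[of w "set w \<union> set W"] sum_count_set[of W "set w \<union> set W"] count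
    by simp
  ultimately obtain X a Y b Y' where w: "w = X @ b # Y'" and W: "W = X @ a # Y" and "b \<noteq> a"
    using parallel_decomp[OF not_equal_is_parallel] by metis
  have tail_count: "count_list (b # Y') z = count_list (a # Y) z" for z
    using count[of z] by (simp add: W w)
  have bY: "b \<in> set Y"
    using tail_count[of b] \<open>b \<noteq> a\<close> by (cases "b \<in> set Y") auto
  have aY': "a \<in> set Y'"
    using tail_count[of a] \<open>b \<noteq> a\<close> by (cases "a \<in> set Y'") auto
  have a_once: "a \<notin> set Y" if "a \<in> set X"
    using twice[of a] that count_list_0_iff[of X a] count_list_0_iff[of Y a] by (auto simp: W)
  have b_once: "b \<notin> set Y'" if "b \<in> set X"
    using twice[of b] count[of b] that count_list_0_iff[of X b] count_list_0_iff[of Y' b]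
    by (auto simp: w)
  consider "b \<notin> set X" "a \<notin> set Y" | "a \<notin> set X" "b \<notin> set Y'"
    | (both_old) "a \<in> set X" "b \<in> set X"
    | (both_new) "a \<notin> set X" "b \<notin> set X" "a \<in> set Y" "b \<in> set Y'"
    using a_once b_once by blast
  then have "\<exists>p q. p \<noteq> q \<and> all_before p q w \<noteq> all_before p q W"
  proof cases
    case 1
    then show ?thesis
      using all_before_first_difference[of b a X Y Y'] aY' \<open>b \<noteq> a\<close> W w by metis
  next
    case 2
    then show ?thesis
      using all_before_first_difference[of a b X Y' Y] bY \<open>b \<noteq> a\<close> W w by metis
  next
    case both_old
    then show ?thesis
      using all_before_first_difference_old[of X a Y b Y'] no_earlier_pair bY b_once W w by metis
  next
    case both_new
    then show ?thesis
      using all_before_first_difference_new[of X a Y b Y'] no_later_pair tail_count \<open>b \<noteq> a\<close> W w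
      by metis
  qed
  then show False
    using before by blast
qed

lemma isoterm_if_twice_and_no_recurring_pair:
  assumes "\<And>z. count_list W z \<le> 2"
    and "\<And>X a e Z. W = X @ a # e # Z \<Longrightarrow> a \<in> set Z \<Longrightarrow> e \<notin> set Z"
    and "\<And>X a e Z. W = X @ a # e # Z \<Longrightarrow> a \<in> set X \<Longrightarrow> e \<notin> set X"
  shows "isoterm W"
  unfolding isoterm_def
proof (intro allI impI)
  fix w assume "(W, w) \<in> Id_M"
  then show "w = W"
    using assms Id_M_count_list Id_M_all_before by (intro eq_if_same_count_list_and_all_before) auto
qed

section \<open>The words W_k\<close>

(* Letters are naturals: 0 is y, 1, ..., 6 are t1, ..., t6, and xv i is x_i.
   xpairs i j is the word x_i x_(i+3) x_(i+1) x_(i+4) ... x_(j-1) x_(j+2). *)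
definition xv :: "nat \<Rightarrow> nat" where
  "xv i = i + 7"

definition xpairs :: "nat \<Rightarrow> nat \<Rightarrow> nat list" where
  "xpairs i j = concat (map (\<lambda>l. [xv l, xv (l + 3)]) [i..<j])"

definition Wk_prefix :: "nat list" where
  "Wk_prefix = [xv 0, 1, xv 1, 2, xv 2, 3]"

definition Wk_suffix :: "nat \<Rightarrow> nat list" where
  "Wk_suffix k = [4, xv (k + 1), 5, xv (k + 2), 6, xv (k + 3)]"

definition Wk :: "nat \<Rightarrow> nat list" where
  "Wk k = Wk_prefix @ 0 # xpairs 0 (Suc k) @ 0 # Wk_suffix k"

lemma xv_eq_iff [simp]: "xv i = xv j \<longleftrightarrow> i = j"
  by (simp add: xv_def)

lemma xv_neq_small [simp]: "n < 7 \<Longrightarrow> xv i \<noteq> n" "n < 7 \<Longrightarrow> n \<noteq> xv i"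
  by (simp_all add: xv_def)

lemma xpairs_empty [simp]: "j \<le> i \<Longrightarrow> xpairs i j = []"
  by (simp add: xpairs_def)

lemma xpairs_Cons: "i < j \<Longrightarrow> xpairs i j = xv i # xv (i + 3) # xpairs (Suc i) j"
  by (simp add: xpairs_def upt_conv_Cons)

lemma xpairs_append:
  assumes "i \<le> j" and "j \<le> l"
  shows "xpairs i l = xpairs i j @ xpairs j l"
proof -
  have "[i..<l] = [i..<j] @ [j..<l]"
    using upt_add_eq_append[of i j "l - j"] assms by simp
  then show ?thesis
    by (simp add: xpairs_def)
qed

lemma set_xpairs: "set (xpairs i j) = {xv l |l. i \<le> l \<and> l < j} \<union> {xv (l + 3) |l. i \<le> l \<and> l < j}"
  by (auto simp: xpairs_def)

lemma small_notin_xpairs [simp]: "n < 7 \<Longrightarrow> n \<notin> set (xpairs i j)"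
  by (auto simp: set_xpairs)

lemma xv_in_xpairs_iff [simp]:
  "xv l \<in> set (xpairs i j) \<longleftrightarrow> (i \<le> l \<and> l < j) \<or> (i + 3 \<le> l \<and> l < j + 3)"
  by (auto simp: set_xpairs intro: exI[of _ "l - 3"])

lemma length_xpairs [simp]: "length (xpairs i j) = 2 * (j - i)"
  by (induction j) (auto simp: xpairs_def Suc_diff_le)

lemma xpairs_3: "xpairs i (i + 3) = [xv i, xv (i + 3), xv (i + 1), xv (i + 4), xv (i + 2), xv (i + 5)]"
  by (simp add: xpairs_Cons)

lemma xpairs_4: "xpairs i (i + 4) =
    [xv i, xv (i + 3), xv (i + 1), xv (i + 4), xv (i + 2), xv (i + 5), xv (i + 3), xv (i + 6)]"
  by (simp add: xpairs_Cons)

lemma xpairs_snoc: "i \<le> j \<Longrightarrow> xpairs i (Suc j) = xpairs i j @ [xv j, xv (j + 3)]"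
  using xpairs_append[of i j "Suc j"] by (simp add: xpairs_Cons)

lemma count_list_Wk_small: "n < 7 \<Longrightarrow> count_list (Wk k) n = (if n = 0 then 2 else 1)"
  by (auto simp: Wk_def Wk_prefix_def Wk_suffix_def numeral_eq_Suc less_Suc_eq)

lemma set_Wk: "set (Wk k) = {0, 1, 2, 3, 4, 5, 6} \<union> {xv i |i. i \<le> k + 3}"
  by (auto simp: Wk_def Wk_prefix_def Wk_suffix_def set_xpairs)

(* A certificate that c occurs exactly twice in W, with gap J between its occurrences.
   It is checked letter by letter for W_k; its clauses on hd J and last J exclude adjacent
   letters that both recur on the same side, and its last clause lists the possible gaps
   consisting of twice-occurring letters. *)
definition gap_shape :: "nat \<Rightarrow> 'a list \<Rightarrow> 'a \<Rightarrow> 'a list \<Rightarrow> 'a list \<Rightarrow> 'a list \<Rightarrow> bool" where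
  "gap_shape k W c L J R \<longleftrightarrow>
     W = L @ c # J @ c # R \<and> c \<notin> set L \<and> c \<notin> set J \<and> c \<notin> set R \<and> J \<noteq> [] \<and>
     (hd J \<in> set L \<or> count_list W (hd J) = 1) \<and>
     (last J \<in> set R \<or> count_list W (last J) = 1) \<and>
     ((\<forall>z\<in>set J. count_list W z = 2) \<longrightarrow>
        (length J = 4 \<and> J ! 1 \<in> set R \<and> J ! 2 \<in> set L) \<or>
        (length J = 2 * k + 2 \<and> hd J \<in> set L \<and> last J \<in> set R))"

lemma gap_shape_Wk_y: "gap_shape k (Wk k) 0 Wk_prefix (xpairs 0 (Suc k)) (Wk_suffix k)"
proof -
  have "hd (xpairs 0 (Suc k)) = xv 0"
    by (simp add: xpairs_Cons)
  moreover have "last (xpairs 0 (Suc k)) = xv (k + 3)"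
    by (simp add: xpairs_snoc)
  ultimately
  show ?thesis
    by (simp add: gap_shape_def Wk_def Wk_prefix_def Wk_suffix_def flip: length_greater_0_conv)
qed

lemma gap_shape_Wk_x0:
  "gap_shape k (Wk k) (xv 0) [] [1, xv 1, 2, xv 2, 3, 0] (xv 3 # xpairs 1 (Suc k) @ 0 # Wk_suffix k)"
proof -
  have "Wk k = [] @ xv 0 # [1, xv 1, 2, xv 2, 3, 0] @ xv 0 # xv 3 # xpairs 1 (Suc k) @ 0 # Wk_suffix k"
    by (simp add: Wk_def Wk_prefix_def xpairs_Cons)
  then show ?thesis
    by (simp add: gap_shape_def count_list_Wk_small Wk_suffix_def)
qed

lemma gap_shape_Wk_x1:
  assumes "3 \<le> k"
  shows "gap_shape k (Wk k) (xv 1) [xv 0, 1] [2, xv 2, 3, 0, xv 0, xv 3]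
    (xv 4 # xpairs 2 (Suc k) @ 0 # Wk_suffix k)"
proof -
  have "Wk k = [xv 0, 1] @ xv 1 # [2, xv 2, 3, 0, xv 0, xv 3] @ xv 1 # xv 4 # xpairs 2 (Suc k) @ 0 # Wk_suffix k"
    using assms by (simp add: Wk_def Wk_prefix_def xpairs_Cons numeral_2_eq_2)
  then show ?thesis
    using assms by (simp add: gap_shape_def count_list_Wk_small Wk_suffix_def)
qed

lemma gap_shape_Wk_x2:
  assumes "4 \<le> k"
  shows "gap_shape k (Wk k) (xv 2) [xv 0, 1, xv 1, 2] [3, 0, xv 0, xv 3, xv 1, xv 4]
    (xv 5 # xpairs 3 (Suc k) @ 0 # Wk_suffix k)"
proof -
  have "Wk k = [xv 0, 1, xv 1, 2] @ xv 2 # [3, 0, xv 0, xv 3, xv 1, xv 4] @ xv 2 # xv 5 # xpairs 3 (Suc k) @ 0 # Wk_suffix k"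
    using assms by (simp add: Wk_def Wk_prefix_def xpairs_Cons numeral_2_eq_2 numeral_3_eq_3)
  then show ?thesis
    using assms by (simp add: gap_shape_def count_list_Wk_small Wk_suffix_def)
qed

lemma gap_shape_Wk_x_middle:
  assumes "i + 3 \<le> k"
  shows "gap_shape k (Wk k) (xv (i + 3)) (Wk_prefix @ 0 # xpairs 0 i @ [xv i])
    [xv (i + 1), xv (i + 4), xv (i + 2), xv (i + 5)] (xv (i + 6) # xpairs (i + 4) (Suc k) @ 0 # Wk_suffix k)"
proof -
  have "xpairs 0 (Suc k) = xpairs 0 i @ xpairs i (i + 4) @ xpairs (i + 4) (Suc k)"
    using assms xpairs_append[of 0 i "Suc k"] xpairs_append[of i "i + 4" "Suc k"] by simp
  then have "Wk k = (Wk_prefix @ 0 # xpairs 0 i @ [xv i]) @ xv (i + 3) #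
      [xv (i + 1), xv (i + 4), xv (i + 2), xv (i + 5)] @ xv (i + 3) #
      xv (i + 6) # xpairs (i + 4) (Suc k) @ 0 # Wk_suffix k"
    by (simp add: Wk_def xpairs_4)
  then show ?thesis
    using assms by (simp add: gap_shape_def Wk_prefix_def Wk_suffix_def)
qed

lemma gap_shape_Wk_x_end1:
  assumes "2 \<le> n"
  shows "gap_shape (n + 2) (Wk (n + 2)) (xv (n + 3)) (Wk_prefix @ 0 # xpairs 0 n @ [xv n])
    [xv (n + 1), xv (n + 4), xv (n + 2), xv (n + 5), 0, 4] [5, xv (n + 4), 6, xv (n + 5)]"
proof -
  have "Wk (n + 2) = (Wk_prefix @ 0 # xpairs 0 n @ [xv n]) @ xv (n + 3) #
      [xv (n + 1), xv (n + 4), xv (n + 2), xv (n + 5), 0, 4] @ xv (n + 3) # [5, xv (n + 4), 6, xv (n + 5)]"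
  proof -
    have "xpairs n (Suc (n + 2)) = [xv n, xv (n + 3), xv (n + 1), xv (n + 4), xv (n + 2), xv (n + 5)]"
      by (simp add: xpairs_Cons)
    then show ?thesis
      using xpairs_append[of 0 n "Suc (n + 2)"] by (simp add: Wk_def Wk_suffix_def)
  qed
  then show ?thesis
    using assms by (simp add: gap_shape_def count_list_Wk_small Wk_prefix_def)
qed

lemma gap_shape_Wk_x_end2:
  assumes "1 \<le> n"
  shows "gap_shape (n + 2) (Wk (n + 2)) (xv (n + 4)) (Wk_prefix @ 0 # xpairs 0 (n + 1) @ [xv (n + 1)])
    [xv (n + 2), xv (n + 5), 0, 4, xv (n + 3), 5] [6, xv (n + 5)]"
proof -
  have "Wk (n + 2) = (Wk_prefix @ 0 # xpairs 0 (n + 1) @ [xv (n + 1)]) @ xv (n + 4) #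
      [xv (n + 2), xv (n + 5), 0, 4, xv (n + 3), 5] @ xv (n + 4) # [6, xv (n + 5)]"
  proof -
    have "xpairs (n + 1) (Suc (n + 2)) = [xv (n + 1), xv (n + 4), xv (n + 2), xv (n + 5)]"
      by (simp add: xpairs_Cons)
    then show ?thesis
      using xpairs_append[of 0 "n + 1" "Suc (n + 2)"] by (simp add: Wk_def Wk_suffix_def)
  qed
  then show ?thesis
    using assms by (simp add: gap_shape_def count_list_Wk_small Wk_prefix_def)
qed

lemma gap_shape_Wk_x_end3:
  "gap_shape k (Wk k) (xv (k + 3)) (Wk_prefix @ 0 # xpairs 0 k @ [xv k])
    [0, 4, xv (k + 1), 5, xv (k + 2), 6] []"
proof -
  have "Wk k = (Wk_prefix @ 0 # xpairs 0 k @ [xv k]) @ xv (k + 3) #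
      [0, 4, xv (k + 1), 5, xv (k + 2), 6] @ xv (k + 3) # []"
    by (simp add: Wk_def Wk_suffix_def xpairs_snoc)
  then show ?thesis
    by (simp add: gap_shape_def count_list_Wk_small Wk_prefix_def)
qed

lemma Wk_repeated_letter:
  assumes "2 \<le> count_list (Wk k) c"
  shows "c = 0 \<or> (\<exists>i\<le>k + 3. c = xv i)"
proof -
  have "c \<in> set (Wk k)"
    using assms count_notin by fastforce
  moreover have "c \<notin> {1, 2, 3, 4, 5, 6}"
    using assms count_list_Wk_small[of c k] by auto
  ultimately show ?thesis
    by (auto simp: set_Wk)
qed

lemma gap_shape_Wk_exists:
  assumes "5 \<le> k" and "c = 0 \<or> (\<exists>i\<le>k + 3. c = xv i)"
  shows "\<exists>L J R. gap_shape k (Wk k) c L J R"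
proof (cases "c = 0")
  case True
  then show ?thesis
    using gap_shape_Wk_y by blast
next
  case False
  with assms obtain i where "i \<le> k + 3" and c: "c = xv i"
    by blast
  then consider "i = 0" | "i = 1" | "i = 2" | "3 \<le> i" "i \<le> k" | "i = k + 1" | "i = k + 2" | "i = k + 3"
    by linarith
  then show ?thesis
  proof cases
    case 4
    then show ?thesis
      using gap_shape_Wk_x_middle[of "i - 3" k] by (auto simp: c)
  next
    case 5
    define n where "n = k - 2"
    have "2 \<le> n" "k = n + 2" "c = xv (n + 3)"
      using assms(1) 5 c by (simp_all add: n_def)
    then show ?thesis
      using gap_shape_Wk_x_end1 by blast
  next
    case 6
    define n where "n = k - 2"
    have "1 \<le> n" "k = n + 2" "c = xv (n + 4)"
      using assms(1) 6 c by (simp_all add: n_def)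
    then show ?thesis
      using gap_shape_Wk_x_end2 by blast
  qed (use gap_shape_Wk_x0 gap_shape_Wk_x1[of k] gap_shape_Wk_x2[of k] gap_shape_Wk_x_end3[of k]
      assms(1) c in auto)
qed

lemma gap_shape_count_list: "gap_shape k W c L J R \<Longrightarrow> count_list W c = 2"
  by (simp add: gap_shape_def)

lemma gap_shape_unique:
  assumes "gap_shape k W c L J R" and "W = L' @ c # J' @ c # R'"
  shows "L' = L \<and> J' = J \<and> R' = R"
proof -
  have "c \<notin> set L'" "c \<notin> set J'"
    using gap_shape_count_list[OF assms(1)] assms(2) count_list_0_iff[of L' c] count_list_0_iff[of J' c]
    by auto
  then show ?thesis
    using assms append_Cons_eq_first_occurrence[of L' c "J' @ c # R'" L "J @ c # R"]
      append_Cons_eq_first_occurrence[of J' c R' J R]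
    by (auto simp: gap_shape_def)
qed

lemma count_list_Wk_le_2:
  assumes "5 \<le> k"
  shows "count_list (Wk k) z \<le> 2"
proof (rule ccontr)
  assume "\<not> count_list (Wk k) z \<le> 2"
  moreover obtain L J R where "gap_shape k (Wk k) z L J R"
    using gap_shape_Wk_exists[OF assms Wk_repeated_letter] calculation by fastforce
  ultimately show False
    using gap_shape_count_list by fastforce
qed

lemma count_list_Wk_xv: "5 \<le> k \<Longrightarrow> i \<le> k + 3 \<Longrightarrow> count_list (Wk k) (xv i) = 2"
  using gap_shape_Wk_exists[of k "xv i"] gap_shape_count_list by fastforce

lemma Wk_no_later_pair:
  assumes "5 \<le> k" and W: "Wk k = X @ a # e # Z" and "a \<in> set Z"
  shows "e \<notin> set Z"
proof
  assume "e \<in> set Z"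
  obtain Z1 Z2 where Z: "Z = Z1 @ a # Z2"
    using \<open>a \<in> set Z\<close> split_list by metis
  have "2 \<le> count_list (Wk k) a"
    using W Z by simp
  then obtain L J R where gap: "gap_shape k (Wk k) a L J R"
    using gap_shape_Wk_exists[OF assms(1) Wk_repeated_letter] by blast
  then have "X = L" and "e = hd J"
    using gap_shape_unique[OF gap, of X "e # Z1" Z2] W Z by auto
  moreover have "2 \<le> count_list (Wk k) e"
    using W \<open>e \<in> set Z\<close> count_list_0_iff[of Z e] by simp
  ultimately have "e \<in> set X"
    using gap by (auto simp: gap_shape_def)
  then have "3 \<le> count_list (Wk k) e"
    using W \<open>e \<in> set Z\<close> count_list_0_iff[of Z e] count_list_0_iff[of X e] by simp
  then show False
    using count_list_Wk_le_2[OF assms(1), of e] by linarith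
qed

lemma Wk_no_earlier_pair:
  assumes "5 \<le> k" and W: "Wk k = X @ a # e # Z" and "a \<in> set X"
  shows "e \<notin> set X"
proof
  assume "e \<in> set X"
  obtain X1 X2 where X: "X = X1 @ e # X2"
    using \<open>e \<in> set X\<close> split_list by metis
  have "2 \<le> count_list (Wk k) e"
    using W X by simp
  then obtain L J R where gap: "gap_shape k (Wk k) e L J R"
    using gap_shape_Wk_exists[OF assms(1) Wk_repeated_letter] by blast
  then have "Z = R" and "a = last J"
    using gap_shape_unique[OF gap, of X1 "X2 @ [a]" Z] W X by auto
  moreover have "2 \<le> count_list (Wk k) a"
    using W \<open>a \<in> set X\<close> count_list_0_iff[of X a] by simp
  ultimately have "a \<in> set Z"
    using gap by (auto simp: gap_shape_def)
  then have "3 \<le> count_list (Wk k) a"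
    using W \<open>a \<in> set X\<close> count_list_0_iff[of Z a] count_list_0_iff[of X a] by simp
  then show False
    using count_list_Wk_le_2[OF assms(1), of a] by linarith
qed

theorem isoterm_Wk: "5 \<le> k \<Longrightarrow> isoterm (Wk k)"
  by (intro isoterm_if_twice_and_no_recurring_pair count_list_Wk_le_2 Wk_no_later_pair Wk_no_earlier_pair)

lemma Wk_pure_gap:
  assumes "5 \<le> k" and W: "Wk k = L @ c # J @ c # R"
    and pure: "\<forall>z\<in>set J. count_list (Wk k) z = 2"
  shows "(length J = 4 \<and> J ! 1 \<in> set R \<and> J ! 2 \<in> set L) \<or>
    (length J = 2 * k + 2 \<and> hd J \<in> set L \<and> last J \<in> set R)"
proof -
  have "2 \<le> count_list (Wk k) c"
    using W by simp
  then obtain L' J' R' where gap: "gap_shape k (Wk k) c L' J' R'"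
    using gap_shape_Wk_exists[OF assms(1) Wk_repeated_letter] by blast
  then have "L = L'" "J = J'" "R = R'"
    using gap_shape_unique[OF gap W] by simp_all
  with gap pure show ?thesis
    unfolding gap_shape_def by blast
qed

section \<open>Substitution instances of W_m inside W_k\<close>

context
  fixes m k :: nat and \<sigma> :: "nat \<Rightarrow> nat list" and P Q :: "nat list"
  assumes m: "5 \<le> m" and k: "5 \<le> k"
    and occurrence: "P @ subst_word \<sigma> (Wk m) @ Q = Wk k"
begin

lemma image_of_repeated_letter_short:
  assumes "2 \<le> count_list (Wk m) x"
  shows "length (\<sigma> x) \<le> 1"
proof (rule ccontr)
  assume "\<not> length (\<sigma> x) \<le> 1"
  then obtain d d' r where \<sigma>x: "\<sigma> x = d # d' # r"
    by (cases "\<sigma> x"; cases "tl (\<sigma> x)") auto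
  obtain U V U' where "Wk m = U @ x # V @ x # U'"
    using split_list_twice[OF assms] .
  then have "Wk k = (P @ subst_word \<sigma> U) @ d # d' # (r @ subst_word \<sigma> V @ d # d' # r @ subst_word \<sigma> U' @ Q)"
    using occurrence \<sigma>x by simp
  then show False
    using Wk_no_later_pair[OF k] by fastforce
qed

lemma image_xv_short: "i \<le> m + 3 \<Longrightarrow> length (\<sigma> (xv i)) \<le> 1"
  using image_of_repeated_letter_short count_list_Wk_xv[OF m] by simp

lemma image_pure_gap:
  assumes W: "Wk m = U @ x # V @ x # U'" and \<sigma>x: "\<sigma> x = [c]"
    and pure: "\<forall>z\<in>set V. 2 \<le> count_list (Wk m) z"
  defines "L \<equiv> P @ subst_word \<sigma> U" and "J \<equiv> subst_word \<sigma> V" and "R \<equiv> subst_word \<sigma> U' @ Q"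
  shows "Wk k = L @ c # J @ c # R"
    and "(length J = 4 \<and> J ! 1 \<in> set R \<and> J ! 2 \<in> set L) \<or>
      (length J = 2 * k + 2 \<and> hd J \<in> set L \<and> last J \<in> set R)"
proof -
  show W': "Wk k = L @ c # J @ c # R"
    using occurrence W \<sigma>x by (simp add: L_def J_def R_def)
  have "count_list (Wk k) z = 2" if "z \<in> set J" for z
  proof -
    obtain y where "y \<in> set V" and "z \<in> set (\<sigma> y)"
      using \<open>z \<in> set J\<close> by (auto simp: J_def set_subst_word)
    then have "2 \<le> count_list (subst_word \<sigma> (Wk m)) z"
      using pure count_list_subst_word_ge[of z \<sigma> y "Wk m"] by fastforce
    also have "\<dots> \<le> count_list (Wk k) z"
      by (simp flip: occurrence)
    finally show ?thesis
      using count_list_Wk_le_2[OF k, of z] by linarith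
  qed
  then show "(length J = 4 \<and> J ! 1 \<in> set R \<and> J ! 2 \<in> set L) \<or>
      (length J = 2 * k + 2 \<and> hd J \<in> set L \<and> last J \<in> set R)"
    using Wk_pure_gap[OF k W'] by blast
qed

lemma image_middle_cascade:
  assumes "i + 3 \<le> m" and "\<sigma> (xv (i + 3)) \<noteq> []"
  shows "\<sigma> (xv (i + 1)) \<noteq> [] \<and> \<sigma> (xv (i + 2)) \<noteq> [] \<and> \<sigma> (xv (i + 4)) \<noteq> [] \<and> \<sigma> (xv (i + 5)) \<noteq> []"
proof -
  let ?V = "[xv (i + 1), xv (i + 4), xv (i + 2), xv (i + 5)]"
  obtain U U' where W: "Wk m = U @ xv (i + 3) # ?V @ xv (i + 3) # U'"
    using gap_shape_Wk_x_middle[OF assms(1)] unfolding gap_shape_def by blast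
  obtain d where d: "\<sigma> (xv (i + 3)) = [d]"
    using image_xv_short[of "i + 3"] assms by (cases "\<sigma> (xv (i + 3))") auto
  have "\<forall>z\<in>set ?V. 2 \<le> count_list (Wk m) z"
    using count_list_Wk_xv[OF m] assms(1) by auto
  then have "length (subst_word \<sigma> ?V) = 4 \<or> length (subst_word \<sigma> ?V) = 2 * k + 2"
    using image_pure_gap(2)[OF W d] by blast
  moreover have short: "length (\<sigma> (xv j)) \<le> 1" if "j \<le> i + 5" for j
    using image_xv_short assms(1) that by simp
  moreover have "length (subst_word \<sigma> ?V) = length (\<sigma> (xv (i + 1))) + length (\<sigma> (xv (i + 4)))
      + length (\<sigma> (xv (i + 2))) + length (\<sigma> (xv (i + 5)))"
    by simp
  ultimately have "length (\<sigma> (xv (i + 1))) = 1 \<and> length (\<sigma> (xv (i + 2))) = 1 \<and>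
      length (\<sigma> (xv (i + 4))) = 1 \<and> length (\<sigma> (xv (i + 5))) = 1"
    using k short[of "i + 1"] short[of "i + 2"] short[of "i + 4"] short[of "i + 5"] by arith
  then show ?thesis
    by auto
qed

lemma image_middle_nonempty_propagates:
  assumes "3 \<le> j0" "j0 \<le> m" "\<sigma> (xv j0) \<noteq> []" and "3 \<le> j" "j \<le> m"
  shows "\<sigma> (xv j) \<noteq> []"
proof (cases "j0 \<le> j")
  case True
  then show ?thesis
  proof (induction rule: dec_induct)
    case (step n)
    then show ?case
      using image_middle_cascade[of "n - 3"] assms by simp
  qed (rule assms(3))
next
  case False
  then have "j \<le> j0"
    by simp
  then show ?thesis
  proof (induction rule: inc_induct)
    case (step n)
    define i where "i = n - 2"
    have "n = i + 2" "i + 3 \<le> m" "\<sigma> (xv (i + 3)) \<noteq> []"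
      using step assms by (simp_all add: i_def)
    then show ?case
      using image_middle_cascade[of i] by simp
  qed (rule assms(3))
qed

lemma image_y_gap:
  assumes "\<sigma> 0 = [c]"
  defines "L \<equiv> P @ subst_word \<sigma> Wk_prefix" and "J \<equiv> subst_word \<sigma> (xpairs 0 (Suc m))"
    and "R \<equiv> subst_word \<sigma> (Wk_suffix m) @ Q"
  shows "Wk k = L @ c # J @ c # R"
    and "(length J = 4 \<and> J ! 1 \<in> set R \<and> J ! 2 \<in> set L) \<or>
      (length J = 2 * k + 2 \<and> hd J \<in> set L \<and> last J \<in> set R)"
proof -
  have "\<forall>z\<in>set (xpairs 0 (Suc m)). 2 \<le> count_list (Wk m) z"
    using count_list_Wk_xv[OF m] by (auto simp: set_xpairs)
  then show "Wk k = L @ c # J @ c # R"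
    and "(length J = 4 \<and> J ! 1 \<in> set R \<and> J ! 2 \<in> set L) \<or>
      (length J = 2 * k + 2 \<and> hd J \<in> set L \<and> last J \<in> set R)"
    using image_pure_gap[OF Wk_def assms(1)] by (simp_all add: L_def J_def R_def)
qed

lemma image_core_without_middle:
  assumes "\<And>j. 3 \<le> j \<Longrightarrow> j \<le> m \<Longrightarrow> \<sigma> (xv j) = []"
  shows "subst_word \<sigma> (xpairs 0 (Suc m)) = (\<sigma> (xv 0) @ \<sigma> (xv 1) @ \<sigma> (xv 2)) @
    (\<sigma> (xv (m + 1)) @ \<sigma> (xv (m + 2)) @ \<sigma> (xv (m + 3)))"
proof -
  define n where "n = m - 2"
  have n: "m = n + 2" and "3 \<le> n"
    using m by (simp_all add: n_def)
  have "xpairs 0 (Suc m) = xpairs 0 3 @ xpairs 3 n @ xpairs n (Suc (n + 2))"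
    using \<open>3 \<le> n\<close> xpairs_append[of 0 3 "Suc (n + 2)"] xpairs_append[of 3 n "Suc (n + 2)"] by (simp add: n)
  moreover have "xpairs 0 3 = [xv 0, xv 3, xv 1, xv 4, xv 2, xv 5]"
    by (simp add: xpairs_Cons numeral_eq_Suc)
  moreover have "xpairs n (Suc (n + 2)) = [xv n, xv (n + 3), xv (n + 1), xv (n + 4), xv (n + 2), xv (n + 5)]"
    by (simp add: xpairs_Cons)
  moreover have "subst_word \<sigma> (xpairs 3 n) = []"
    using assms by (auto simp: subst_word_eq_Nil_iff set_xpairs n)
  ultimately show ?thesis
    using assms m \<open>3 \<le> n\<close> by (simp add: n numeral_eq_Suc)
qed

lemma image_middle_some_nonempty:
  assumes \<sigma>0: "\<sigma> 0 = [c]"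
  shows "\<exists>j. 3 \<le> j \<and> j \<le> m \<and> \<sigma> (xv j) \<noteq> []"
proof (rule ccontr)
  assume none: "\<not> ?thesis"
  define L where "L = P @ subst_word \<sigma> Wk_prefix"
  define R where "R = subst_word \<sigma> (Wk_suffix m) @ Q"
  define J1 where "J1 = \<sigma> (xv 0) @ \<sigma> (xv 1) @ \<sigma> (xv 2)"
  define J2 where "J2 = \<sigma> (xv (m + 1)) @ \<sigma> (xv (m + 2)) @ \<sigma> (xv (m + 3))"
  have J: "subst_word \<sigma> (xpairs 0 (Suc m)) = J1 @ J2"
    unfolding J1_def J2_def using none by (intro image_core_without_middle) auto
  have W: "Wk k = L @ c # (J1 @ J2) @ c # R"
    using image_y_gap(1)[OF \<sigma>0] J by (simp add: L_def R_def)
  have "length (J1 @ J2) \<le> 6"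
    using image_xv_short[of 0] image_xv_short[of 1] image_xv_short[of 2]
      image_xv_short[of "m + 1"] image_xv_short[of "m + 2"] image_xv_short[of "m + 3"]
    by (simp add: J1_def J2_def)
  then have "length (J1 @ J2) = 4" and one: "(J1 @ J2) ! 1 \<in> set R" and two: "(J1 @ J2) ! 2 \<in> set L"
    using image_y_gap(2)[OF \<sigma>0] J k by (auto simp: L_def R_def)
  have "\<exists>z. z \<in> set L \<and> z \<in> set (J1 @ J2) \<and> z \<in> set R"
  proof (cases "2 \<le> length J1")
    case True
    then have "(J1 @ J2) ! 1 \<in> set J1"
      by (simp add: nth_append)
    moreover have "set J1 \<subseteq> set L"
      by (auto simp: L_def J1_def Wk_prefix_def)
    ultimately show ?thesis
      using one by auto
  next
    case False
    then have "(J1 @ J2) ! 2 \<in> set J2"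
      using \<open>length (J1 @ J2) = 4\<close> by (simp add: nth_append)
    moreover have "set J2 \<subseteq> set R"
      by (auto simp: R_def J2_def Wk_suffix_def)
    ultimately show ?thesis
      using two by auto
  qed
  then obtain z where "0 < count_list L z" "0 < count_list (J1 @ J2) z" "0 < count_list R z"
    unfolding count_list_pos_iff by blast
  then show False
    using count_list_gap_le[OF W, of z] count_list_Wk_le_2[OF k, of z] by linarith
qed

lemma image_xv_singleton:
  assumes \<sigma>0: "\<sigma> 0 = [c]" and "1 \<le> j" "j \<le> m + 2"
  shows "length (\<sigma> (xv j)) = 1"
proof -
  obtain j0 where "3 \<le> j0" "j0 \<le> m" "\<sigma> (xv j0) \<noteq> []"
    using image_middle_some_nonempty[OF \<sigma>0] by blast
  then have middle: "\<sigma> (xv i) \<noteq> []" if "3 \<le> i" "i \<le> m" for i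
    using image_middle_nonempty_propagates that by blast
  consider "j = 1 \<or> j = 2" | "3 \<le> j" "j \<le> m" | "j = m + 1 \<or> j = m + 2"
    using assms(2,3) by linarith
  then have "\<sigma> (xv j) \<noteq> []"
  proof cases
    case 1
    then show ?thesis
      using image_middle_cascade[of 0] middle[of 3] m by (auto simp: numeral_2_eq_2)
  next
    case 3
    define i where "i = m - 3"
    have "m = i + 3" and "j = i + 4 \<or> j = i + 5"
      using m 3 by (simp_all add: i_def)
    then show ?thesis
      using image_middle_cascade[of i] middle[of "i + 3"] m by auto
  qed (rule middle)
  then show ?thesis
    using image_xv_short[of j] assms(3) by (cases "\<sigma> (xv j)") auto
qed

lemma image_core_long:
  assumes \<sigma>0: "\<sigma> 0 = [c]"
  defines "L \<equiv> P @ subst_word \<sigma> Wk_prefix" and "J \<equiv> subst_word \<sigma> (xpairs 0 (Suc m))"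
    and "R \<equiv> subst_word \<sigma> (Wk_suffix m) @ Q"
  shows "length J = 2 * k + 2 \<and> hd J \<in> set L \<and> last J \<in> set R"
proof -
  have "J = \<sigma> (xv 0) @ \<sigma> (xv 3) @ \<sigma> (xv 1) @ \<sigma> (xv 4) @ \<sigma> (xv 2) @ \<sigma> (xv 5) @
      subst_word \<sigma> (xpairs 3 (Suc m))"
    using m xpairs_append[of 0 3 "Suc m"] xpairs_3[of 0] by (simp add: J_def numeral_2_eq_2)
  moreover have "length (\<sigma> (xv j)) = 1" if "1 \<le> j" "j \<le> 5" for j
    using image_xv_singleton[OF \<sigma>0] that m by simp
  ultimately have "5 \<le> length J"
    by simp
  then show ?thesis
    using image_y_gap(2)[OF \<sigma>0] by (auto simp: L_def J_def R_def)
qed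

lemma image_core_ends_nonempty:
  assumes \<sigma>0: "\<sigma> 0 = [c]"
  shows "\<sigma> (xv 0) \<noteq> []" and "\<sigma> (xv (m + 3)) \<noteq> []"
proof -
  define L where "L = P @ subst_word \<sigma> Wk_prefix"
  define J where "J = subst_word \<sigma> (xpairs 0 (Suc m))"
  define R where "R = subst_word \<sigma> (Wk_suffix m) @ Q"
  have W: "Wk k = L @ c # J @ c # R" and long: "hd J \<in> set L" "last J \<in> set R"
    using image_y_gap(1)[OF \<sigma>0] image_core_long[OF \<sigma>0] by (simp_all add: L_def J_def R_def)
  have twice_in_J: "2 \<le> count_list J d" if "\<sigma> (xv i) = [d]" "3 \<le> i" "i \<le> m" for i d
  proof -
    have "count_list (xpairs 0 (Suc m)) (xv i) = 2"
      using count_list_Wk_xv[OF m, of i] that(2,3) by (simp add: Wk_def Wk_prefix_def Wk_suffix_def)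
    then show ?thesis
      using count_list_subst_word_ge[of d \<sigma> "xv i" "xpairs 0 (Suc m)"] that(1) by (simp add: J_def)
  qed
  have not_thrice: False if "d \<in> set L \<or> d \<in> set R" and "2 \<le> count_list J d" for d
    using that count_list_gap_le[OF W, of d] count_list_Wk_le_2[OF k, of d]
    by (auto simp flip: count_list_pos_iff)
  show "\<sigma> (xv 0) \<noteq> []"
  proof
    assume "\<sigma> (xv 0) = []"
    obtain d where d: "\<sigma> (xv 3) = [d]"
      using image_xv_singleton[OF \<sigma>0, of 3] m by (auto simp: length_Suc_conv)
    then have "hd J = d"
      using \<open>\<sigma> (xv 0) = []\<close> by (simp add: J_def xpairs_Cons)
    then show False
      using not_thrice[of d] twice_in_J[OF d] long(1) m by simp
  qed
  show "\<sigma> (xv (m + 3)) \<noteq> []"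
  proof
    assume "\<sigma> (xv (m + 3)) = []"
    obtain d where d: "\<sigma> (xv m) = [d]"
      using image_xv_singleton[OF \<sigma>0, of m] m by (auto simp: length_Suc_conv)
    then have "last J = d"
      using \<open>\<sigma> (xv (m + 3)) = []\<close> by (simp add: J_def xpairs_snoc)
    then show False
      using not_thrice[of d] twice_in_J[OF d] long(2) m by simp
  qed
qed

theorem Wk_occurrence_index_eq:
  assumes "\<sigma> 0 \<noteq> []"
  shows "m = k"
proof -
  obtain c where \<sigma>0: "\<sigma> 0 = [c]"
    using image_of_repeated_letter_short[of 0] count_list_Wk_small[of 0 m] assms
    by (auto simp: length_Suc_conv le_Suc_eq)
  have "length (\<sigma> x) = 1" if x: "x \<in> set (xpairs 0 (Suc m))" for x
  proof -
    obtain j where "x = xv j" "j \<le> m + 3"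
      using x by (auto simp: set_xpairs)
    moreover have "\<sigma> (xv j) \<noteq> []"
    proof (cases "j = 0 \<or> j = m + 3")
      case True
      then show ?thesis
        using image_core_ends_nonempty[OF \<sigma>0] by auto
    next
      case False
      then show ?thesis
        using image_xv_singleton[OF \<sigma>0, of j] \<open>j \<le> m + 3\<close> by fastforce
    qed
    ultimately show ?thesis
      using image_xv_short[of j] by (cases "\<sigma> (xv j)") auto
  qed
  then have "length (subst_word \<sigma> (xpairs 0 (Suc m))) = 2 * m + 2"
    by (simp add: length_subst_word_singletons)
  then show ?thesis
    using image_core_long[OF \<sigma>0] by simp
qed

end

section \<open>Continuum many equational theories\<close>

definition Wk_theory :: "nat set \<Rightarrow> (nat list \<times> nat list) set" where
  "Wk_theory S = {(u, v). \<forall>n\<in>S. \<forall>\<sigma> p q.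
     p @ subst_word \<sigma> u @ q = Wk (n + 5) \<longleftrightarrow> p @ subst_word \<sigma> v @ q = Wk (n + 5)}"

lemma equational_theory_Wk_theory: "equational_theory (Wk_theory S)"
  unfolding equational_theory_def
proof (intro conjI allI impI)
  show "equiv UNIV (Wk_theory S)"
  proof (rule equivI)
    show "Wk_theory S \<subseteq> UNIV \<times> UNIV"
      by simp
    show "refl (Wk_theory S)"
      by (rule refl_onI) (auto simp: Wk_theory_def)
    show "sym (Wk_theory S)"
      by (rule symI) (auto simp: Wk_theory_def)
    show "trans (Wk_theory S)"
      by (rule transI) (auto simp: Wk_theory_def)
  qed
next
  fix u v w z
  assume "(u, v) \<in> Wk_theory S"
  then have "(p @ subst_word \<sigma> w) @ subst_word \<sigma> u @ (subst_word \<sigma> z @ q) = Wk (n + 5) \<longleftrightarrow>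
      (p @ subst_word \<sigma> w) @ subst_word \<sigma> v @ (subst_word \<sigma> z @ q) = Wk (n + 5)"
    if "n \<in> S" for n \<sigma> p q
    using that unfolding Wk_theory_def by blast
  then show "(w @ u @ z, w @ v @ z) \<in> Wk_theory S"
    unfolding Wk_theory_def by simp
next
  fix u v \<tau>
  assume "(u, v) \<in> Wk_theory S"
  then show "(subst_word \<tau> u, subst_word \<tau> v) \<in> Wk_theory S"
    by (simp add: Wk_theory_def subst_word_subst_word)
qed

lemma Id_M_subset_Wk_theory: "Id_M \<subseteq> Wk_theory S"
proof -
  have "p @ subst_word \<sigma> v @ q = Wk (n + 5)"
    if "(u, v) \<in> Id_M" and "p @ subst_word \<sigma> u @ q = Wk (n + 5)" for u v n \<sigma> p q
  proof -
    have "(Wk (n + 5), p @ subst_word \<sigma> v @ q) \<in> Id_M"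
      using Id_M_subst_context[OF that(1), where p = p and \<sigma> = \<sigma> and q = q] that(2) by simp
    then show ?thesis
      using isoterm_Wk[of "n + 5"] unfolding isoterm_def by simp
  qed
  then show ?thesis
    unfolding Wk_theory_def using Id_M_sym by blast
qed

lemma Wk_theory_separates: "(Wk (m + 5), Wk (m + 5) @ [0]) \<in> Wk_theory S \<longleftrightarrow> m \<notin> S"
proof
  assume "(Wk (m + 5), Wk (m + 5) @ [0]) \<in> Wk_theory S"
  then have "\<forall>n\<in>S. \<forall>\<sigma> p q. p @ subst_word \<sigma> (Wk (m + 5)) @ q = Wk (n + 5) \<longleftrightarrow>
      p @ subst_word \<sigma> (Wk (m + 5) @ [0]) @ q = Wk (n + 5)"
    unfolding Wk_theory_def mem_Collect_eq case_prod_conv .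
  note identities = this
  show "m \<notin> S"
  proof
    assume "m \<in> S"
    from identities[rule_format, OF this, where \<sigma> = "\<lambda>x. [x]" and p = "[]" and q = "[]"] show False
      by (simp add: subst_word_singleton)
  qed
next
  assume "m \<notin> S"
  have erased: "\<sigma> 0 = []" if "n \<in> S" and occ: "p @ subst_word \<sigma> (Wk (m + 5)) @ q = Wk (n + 5)"
    for n \<sigma> p q
    using Wk_occurrence_index_eq[OF _ _ occ] that(1) \<open>m \<notin> S\<close> by fastforce
  have "p @ subst_word \<sigma> (Wk (m + 5)) @ q = Wk (n + 5) \<longleftrightarrow>
      p @ subst_word \<sigma> (Wk (m + 5) @ [0]) @ q = Wk (n + 5)" if "n \<in> S" for n \<sigma> p q
  proof
    assume occ: "p @ subst_word \<sigma> (Wk (m + 5)) @ q = Wk (n + 5)"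
    then show "p @ subst_word \<sigma> (Wk (m + 5) @ [0]) @ q = Wk (n + 5)"
      using erased[OF that occ] by simp
  next
    assume "p @ subst_word \<sigma> (Wk (m + 5) @ [0]) @ q = Wk (n + 5)"
    then have occ: "p @ subst_word \<sigma> (Wk (m + 5)) @ (\<sigma> 0 @ q) = Wk (n + 5)"
      by simp
    then show "p @ subst_word \<sigma> (Wk (m + 5)) @ q = Wk (n + 5)"
      using erased[OF that occ] by simp
  qed
  then show "(Wk (m + 5), Wk (m + 5) @ [0]) \<in> Wk_theory S"
    unfolding Wk_theory_def mem_Collect_eq case_prod_conv by blast
qed

lemma inj_Wk_theory: "inj Wk_theory"
proof (rule injI)
  fix S T
  assume "Wk_theory S = Wk_theory T"
  then have "m \<notin> S \<longleftrightarrow> m \<notin> T" for m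
    using Wk_theory_separates[of m S] Wk_theory_separates[of m T] by simp
  then show "S = T"
    by blast
qed

lemma uncountable_nat_sets: "uncountable (UNIV :: nat set set)"
proof
  assume "countable (UNIV :: nat set set)"
  then have "range (from_nat_into (UNIV :: nat set set)) = Pow UNIV"
    by simp
  then show False
    using Cantors_theorem[of "UNIV :: nat set"] by blast
qed

theorem corollary1:
  shows "\<not> countable subvariety_theories"
proof
  assume "countable subvariety_theories"
  moreover have "range Wk_theory \<subseteq> subvariety_theories"
    using equational_theory_Wk_theory Id_M_subset_Wk_theory by (auto simp: subvariety_theories_def)
  ultimately have "countable (range Wk_theory)"
    by (rule countable_subset[rotated])
  then have "countable (UNIV :: nat set set)"
    using inj_Wk_theory by (rule countable_image_inj_on)
  then show False
    using uncountable_nat_sets by contradiction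
qed

end
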